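(* There exist absolute constants $C,c>0$ such that for every $r\ge1$ and all functions $P_1,\dots,P_n\colon\mathbb{F}_2^m\to\mathbb{F}_2$ with $\operatorname{rank}_1(P_i)\le r$ for all $i$, the distribution $\mathcal{P}$ of $(P_1(X),\dots,P_n(X))$, $X$ uniform on $\mathbb{F}_2^m$, satisfies \[ \|\mathcal{P}-\mathrm{Ber}(1/3)^{\otimes n}\|_{\mathtt{TV}}\ \ge\ 1-2^{-c\,2^{-Cr^2}n}. \]
   Context: $\operatorname{rank}_1(P)$ is the smallest positive integer $k$ with $P=\Gamma(L_1,\dots,L_k)$ for polynomials $L_j$ of degree at most $1$ and some $\Gamma\colon\mathbb{F}_2^k\to\mathbb{F}_2$. Total variation distance: $\frac12\sum_x|\mathcal{D}_1(x)-\mathcal{D}_2(x)|$. *)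

theory Defs
  imports Complex_Main
begin

text \<open>F_2 is modelled by bool (True = 1); F_2^m by bool lists of length m.\<close>

definition vecs :: "nat \<Rightarrow> bool list set" where
  "vecs m = {xs. length xs = m}"

definition deg_le1 :: "nat \<Rightarrow> (bool list \<Rightarrow> bool) \<Rightarrow> bool" where
  "deg_le1 m L \<longleftrightarrow> (\<exists>(a0::bool) (a::nat \<Rightarrow> bool). \<forall>x \<in> vecs m.
      L x = odd (of_bool a0 + (\<Sum>i<m. of_bool (a i \<and> x ! i)) :: nat))"

definition rank1 :: "nat \<Rightarrow> (bool list \<Rightarrow> bool) \<Rightarrow> nat" where
  "rank1 m P = (LEAST k. 0 < k \<and> (\<exists>(L::nat \<Rightarrow> bool list \<Rightarrow> bool) (\<Gamma>::bool list \<Rightarrow> bool).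
      (\<forall>j<k. deg_le1 m (L j)) \<and> (\<forall>x \<in> vecs m. P x = \<Gamma> (map (\<lambda>j. L j x) [0..<k]))))"

definition distP :: "nat \<Rightarrow> nat \<Rightarrow> (nat \<Rightarrow> bool list \<Rightarrow> bool) \<Rightarrow> bool list \<Rightarrow> real" where
  "distP m n P y = real (card {x \<in> vecs m. map (\<lambda>i. P i x) [0..<n] = y}) / 2 ^ m"

definition ber13 :: "bool list \<Rightarrow> real" where
  "ber13 y = (\<Prod>b\<leftarrow>y. if b then 1/3 else 2/3)"

definition tv_dist :: "bool list set \<Rightarrow> (bool list \<Rightarrow> real) \<Rightarrow> (bool list \<Rightarrow> real) \<Rightarrow> real" where
  "tv_dist S D1 D2 = (1/2) * (\<Sum>y\<in>S. \<bar>D1 y - D2 y\<bar>)"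

end

theory Submission
  imports Defs "HOL-Library.FuncSet"
begin

text \<open>The total variation distance is one minus the overlap \<open>\<Sum>_y min (P(y), Ber(y))\<close>, and the
  overlap is bounded on affine subspaces (cells) of \<open>F_2^m\<close> by induction on \<open>r\<close>. On a cell, write
  each \<open>P_i\<close> as a function of at most \<open>r\<close> linear forms and choose a maximal set \<open>S\<close> of indices
  whose forms are jointly independent modulo the cell. If \<open>|S|\<close> is large, the \<open>P_i\<close> with
  \<open>i \<in> S\<close> are independent on the cell and each has dyadic bias, at distance at least \<open>2^-r/3\<close>
  from \<open>1/3\<close>; bounding \<open>min\<close> by the geometric mean turns the overlap into a product of
  Bhattacharyya coefficients, each at most \<open>1 - 2^-(2r+7)\<close>. If \<open>|S|\<close> is small, split the cell
  according to the values of the at most \<open>r|S|\<close> forms belonging to \<open>S\<close>. By maximality, every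
  \<open>P_i\<close> has rank at most \<open>r - 1\<close> on each of the at most \<open>2^(r|S|)\<close> subcells, so the
  induction hypothesis applies there and the splitting costs only the factor \<open>2^(r|S|)\<close>.\<close>

section \<open>Parities and linear forms over \<open>F_2\<close>\<close>

definition parity :: "'k set \<Rightarrow> ('k \<Rightarrow> bool) \<Rightarrow> bool" where
  "parity R P \<longleftrightarrow> odd (card {k \<in> R. P k})"

text \<open>A linear form on \<open>F_2^m\<close> is given by a coefficient function \<open>a :: nat \<Rightarrow> bool\<close> of which only
  the values below \<open>m\<close> matter; sums of forms are pointwise exclusive or.\<close>
definition lin_form :: "nat \<Rightarrow> (nat \<Rightarrow> bool) \<Rightarrow> bool list \<Rightarrow> bool" where
  "lin_form m a x = parity {..<m} (\<lambda>i. a i \<and> x ! i)"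

definition xor_vec :: "(nat \<Rightarrow> bool) \<Rightarrow> (nat \<Rightarrow> bool) \<Rightarrow> nat \<Rightarrow> bool" where
  "xor_vec a b = (\<lambda>i. a i \<noteq> b i)"

definition xor_sum :: "'k set \<Rightarrow> ('k \<Rightarrow> nat \<Rightarrow> bool) \<Rightarrow> nat \<Rightarrow> bool" where
  "xor_sum R g = (\<lambda>i. parity R (\<lambda>k. g k i))"

definition zero_below :: "nat \<Rightarrow> (nat \<Rightarrow> bool) \<Rightarrow> bool" where
  "zero_below m a \<longleftrightarrow> (\<forall>i<m. \<not> a i)"

lemma parity_empty [simp]: "parity {} P = False"
  by (simp add: parity_def)

lemma parity_False [simp]: "parity R (\<lambda>_. False) = False"
  by (simp add: parity_def)

lemma parity_insert:
  assumes "finite R" "k \<notin> R"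
  shows "parity (insert k R) P = (P k \<noteq> parity R P)"
proof -
  have "{k' \<in> insert k R. P k'} = (if P k then insert k {k' \<in> R. P k'} else {k' \<in> R. P k'})"
    by auto
  then show ?thesis
    using assms by (simp add: parity_def)
qed

lemma parity_cong:
  assumes "\<And>k. k \<in> R \<Longrightarrow> P k = Q k"
  shows "parity R P = parity R Q"
proof -
  have "{k \<in> R. P k} = {k \<in> R. Q k}"
    using assms by auto
  then show ?thesis
    by (simp add: parity_def)
qed

lemma parity_Un:
  assumes "finite A" "finite B" "A \<inter> B = {}"
  shows "parity (A \<union> B) P = (parity A P \<noteq> parity B P)"
proof -
  have "{k \<in> A \<union> B. P k} = {k \<in> A. P k} \<union> {k \<in> B. P k}"
    by auto
  moreover have "card ({k \<in> A. P k} \<union> {k \<in> B. P k}) = card {k \<in> A. P k} + card {k \<in> B. P k}"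
    using assms by (intro card_Un_disjoint) auto
  ultimately show ?thesis
    by (simp add: parity_def)
qed

lemma parity_image:
  assumes "inj_on h A"
  shows "parity (h ` A) P = parity A (\<lambda>a. P (h a))"
proof -
  have "{k \<in> h ` A. P k} = h ` {a \<in> A. P (h a)}"
    by auto
  moreover have "inj_on h {a \<in> A. P (h a)}"
    using assms by (rule inj_on_subset) auto
  ultimately show ?thesis
    by (simp add: parity_def card_image)
qed

lemma parity_xor:
  "finite R \<Longrightarrow> parity R (\<lambda>k. P k \<noteq> Q k) = (parity R P \<noteq> parity R Q)"
  by (induction R rule: finite_induct) (auto simp: parity_insert)

lemma parity_swap:
  assumes "finite A" "finite B"
  shows "parity A (\<lambda>a. parity B (\<lambda>b. R a b)) = parity B (\<lambda>b. parity A (\<lambda>a. R a b))"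
  using assms(2)
proof (induction B rule: finite_induct)
  case (insert b B)
  have "parity A (\<lambda>a. parity (insert b B) (R a)) = parity A (\<lambda>a. R a b \<noteq> parity B (R a))"
    using insert.hyps by (intro parity_cong) (simp add: parity_insert)
  also have "\<dots> = (parity A (\<lambda>a. R a b) \<noteq> parity A (\<lambda>a. parity B (R a)))"
    using assms(1) by (rule parity_xor)
  also have "\<dots> = parity (insert b B) (\<lambda>b. parity A (\<lambda>a. R a b))"
    using insert by (simp add: parity_insert)
  finally show ?case .
qed simp

lemma lin_form_xor_vec: "lin_form m (xor_vec a b) x = (lin_form m a x \<noteq> lin_form m b x)"
proof -
  have "lin_form m (xor_vec a b) x = parity {..<m} (\<lambda>i. (a i \<and> x ! i) \<noteq> (b i \<and> x ! i))"
    unfolding lin_form_def by (rule parity_cong) (auto simp: xor_vec_def)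
  also have "\<dots> = (lin_form m a x \<noteq> lin_form m b x)"
    unfolding lin_form_def by (rule parity_xor) simp
  finally show ?thesis .
qed

lemma lin_form_xor_sum:
  assumes "finite R"
  shows "lin_form m (xor_sum R g) x = parity R (\<lambda>k. lin_form m (g k) x)"
proof -
  have "(parity R (\<lambda>k. g k i) \<and> x ! i) = parity R (\<lambda>k. g k i \<and> x ! i)" for i
    by (cases "x ! i") simp_all
  then have "lin_form m (xor_sum R g) x = parity {..<m} (\<lambda>i. parity R (\<lambda>k. g k i \<and> x ! i))"
    by (simp add: lin_form_def xor_sum_def)
  also have "\<dots> = parity R (\<lambda>k. lin_form m (g k) x)"
    unfolding lin_form_def using assms by (intro parity_swap) auto
  finally show ?thesis .
qed

lemma lin_form_zero_below: "zero_below m a \<Longrightarrow> \<not> lin_form m a x"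
  unfolding lin_form_def zero_below_def by (subst parity_cong[of _ _ "\<lambda>_. False"]) auto

lemma xor_sum_empty [simp]: "xor_sum {} g = (\<lambda>i. False)"
  by (simp add: xor_sum_def)

lemma finite_vecs [simp]: "finite (vecs m)"
  unfolding vecs_def using finite_lists_length_eq[of "UNIV :: bool set" m] by simp

lemma card_vecs: "card (vecs m) = 2 ^ m"
  unfolding vecs_def using card_lists_length_eq[of "UNIV :: bool set" m] by simp

lemma vecs_Suc: "vecs (Suc m) = (\<lambda>(xs, b). xs @ [b]) ` (vecs m \<times> UNIV)"
proof
  show "vecs (Suc m) \<subseteq> (\<lambda>(xs, b). xs @ [b]) ` (vecs m \<times> UNIV)"
  proof
    fix y assume "y \<in> vecs (Suc m)"
    then have "y = butlast y @ [last y]" and "butlast y \<in> vecs m"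
      by (auto simp: vecs_def intro!: append_butlast_last_id[symmetric])
    then show "y \<in> (\<lambda>(xs, b). xs @ [b]) ` (vecs m \<times> UNIV)"
      by force
  qed
qed (auto simp: vecs_def)

lemma sum_vecs_prod:
  fixes h :: "nat \<Rightarrow> bool \<Rightarrow> 'c::comm_semiring_1"
  shows "(\<Sum>x\<in>vecs m. \<Prod>i<m. h i (x ! i)) = (\<Prod>i<m. h i True + h i False)"
proof (induction m)
  case 0
  have "vecs 0 = {[]}"
    by (auto simp: vecs_def)
  then show ?case
    by simp
next
  case (Suc m)
  have inj: "inj_on (\<lambda>(xs, b). xs @ [b]) (vecs m \<times> UNIV)"
    by (auto simp: inj_on_def)
  have snoc: "(\<Prod>i<Suc m. h i ((xs @ [b]) ! i)) = (\<Prod>i<m. h i (xs ! i)) * h m b"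
    if "xs \<in> vecs m" for xs b
    using that by (auto simp: vecs_def nth_append intro!: prod.cong)
  have "(\<Sum>x\<in>vecs (Suc m). \<Prod>i<Suc m. h i (x ! i))
      = (\<Sum>xs\<in>vecs m. \<Sum>b\<in>UNIV. (\<Prod>i<m. h i (xs ! i)) * h m b)"
    unfolding vecs_Suc sum.reindex[OF inj] sum.cartesian_product
    by (intro sum.cong refl) (auto simp del: prod.lessThan_Suc simp: snoc)
  also have "\<dots> = (\<Sum>xs\<in>vecs m. \<Prod>i<m. h i (xs ! i)) * (h m True + h m False)"
    by (simp add: UNIV_bool sum.distrib sum_distrib_left sum_distrib_right algebra_simps)
  finally show ?case
    using Suc by simp
qed

lemma sum_card_fibers:
  assumes "finite X" "finite Y" "F ` X \<subseteq> Y"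
  shows "(\<Sum>y\<in>Y. real (card {x \<in> X. F x = y})) = real (card X)"
proof -
  have "(\<Sum>y\<in>Y. \<Sum>x\<in>{x \<in> X. F x = y}. 1 :: real) = (\<Sum>x\<in>X. 1)"
    using assms by (intro sum.group) auto
  then show ?thesis
    by simp
qed

section \<open>Character sums on cells\<close>

definition sgn_bool :: "bool \<Rightarrow> real" where
  "sgn_bool b = (if b then -1 else 1)"

lemma sgn_bool_parity: "finite R \<Longrightarrow> sgn_bool (parity R P) = (\<Prod>k\<in>R. sgn_bool (P k))"
  by (induction R rule: finite_induct) (auto simp: parity_insert sgn_bool_def)

lemma prod_sgn_lin_form:
  "finite R \<Longrightarrow> (\<Prod>k\<in>R. sgn_bool (lin_form m (g k) x)) = sgn_bool (lin_form m (xor_sum R g) x)"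
  by (simp add: lin_form_xor_sum sgn_bool_parity)

lemma sgn_lin_form_xor_vec:
  "sgn_bool (lin_form m (xor_vec a b) x) = sgn_bool (lin_form m a x) * sgn_bool (lin_form m b x)"
  by (simp add: lin_form_xor_vec sgn_bool_def)

lemma sum_sgn_lin_form:
  assumes "\<not> zero_below m a"
  shows "(\<Sum>x\<in>vecs m. sgn_bool (lin_form m a x)) = 0"
proof -
  have "(\<Sum>x\<in>vecs m. sgn_bool (lin_form m a x)) = (\<Sum>x\<in>vecs m. \<Prod>i<m. sgn_bool (a i \<and> x ! i))"
    by (simp add: lin_form_def sgn_bool_parity)
  also have "\<dots> = (\<Prod>i<m. sgn_bool (a i \<and> True) + sgn_bool (a i \<and> False))"
    by (rule sum_vecs_prod)
  also have "\<dots> = 0"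
    using assms by (auto simp: zero_below_def sgn_bool_def intro: prod_zero)
  finally show ?thesis .
qed

lemma of_bool_all_eq_expansion:
  assumes "finite K"
  shows "(of_bool (\<forall>k\<in>K. b k = w k) :: real)
    = (1/2) ^ card K * (\<Sum>R\<in>Pow K. \<Prod>k\<in>R. sgn_bool (w k) * sgn_bool (b k))"
proof -
  have "(of_bool (\<forall>k\<in>K. b k = w k) :: real) = (\<Prod>k\<in>K. of_bool (b k = w k))"
    using assms by (induction K rule: finite_induct) auto
  also have "\<dots> = (\<Prod>k\<in>K. (1/2) * (sgn_bool (w k) * sgn_bool (b k) + 1))"
    by (intro prod.cong) (auto simp: sgn_bool_def)
  also have "\<dots> = (1/2) ^ card K * (\<Prod>k\<in>K. sgn_bool (w k) * sgn_bool (b k) + 1)"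
    by (simp only: prod.distrib prod_constant)
  also have "(\<Prod>k\<in>K. sgn_bool (w k) * sgn_bool (b k) + 1)
      = (\<Sum>R\<in>Pow K. \<Prod>k\<in>R. sgn_bool (w k) * sgn_bool (b k))"
    using assms by (simp add: prod_add)
  finally show ?thesis .
qed

definition cell :: "nat \<Rightarrow> (nat \<Rightarrow> bool) set \<Rightarrow> ((nat \<Rightarrow> bool) \<Rightarrow> bool) \<Rightarrow> bool list set" where
  "cell m U c = {x \<in> vecs m. \<forall>u\<in>U. lin_form m u x = c u}"

definition indep_mod :: "nat \<Rightarrow> (nat \<Rightarrow> bool) set \<Rightarrow> 'k set \<Rightarrow> ('k \<Rightarrow> nat \<Rightarrow> bool) \<Rightarrow> bool" where
  "indep_mod m U K g \<longleftrightarrow>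
    (\<forall>T\<subseteq>U. \<forall>R\<subseteq>K. R \<noteq> {} \<longrightarrow> \<not> zero_below m (xor_vec (xor_sum T id) (xor_sum R g)))"

lemma finite_cell [simp]: "finite (cell m U c)"
  by (simp add: cell_def)

lemma cell_empty [simp]: "cell m {} c = vecs m"
  by (simp add: cell_def)

lemma sum_cell_sgn_lin_form:
  assumes "finite U" and nonzero: "\<And>T. T \<subseteq> U \<Longrightarrow> \<not> zero_below m (xor_vec (xor_sum T id) h)"
  shows "(\<Sum>x\<in>cell m U c. sgn_bool (lin_form m h x)) = 0"
proof -
  define s where "s T = (\<Prod>u\<in>T. sgn_bool (c u))" for T
  have expand: "(of_bool (\<forall>u\<in>U. lin_form m u x = c u) :: real)
      = (1/2) ^ card U * (\<Sum>T\<in>Pow U. s T * sgn_bool (lin_form m (xor_sum T id) x))" for x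
    unfolding of_bool_all_eq_expansion[OF \<open>finite U\<close>] s_def
    using \<open>finite U\<close>
    by (auto simp: prod.distrib prod_sgn_lin_form[of _ m id, simplified] dest: finite_subset
        intro!: sum.cong)
  have "(\<Sum>x\<in>cell m U c. sgn_bool (lin_form m h x))
      = (\<Sum>x\<in>vecs m. of_bool (\<forall>u\<in>U. lin_form m u x = c u) * sgn_bool (lin_form m h x))"
    by (simp add: cell_def Int_def conj_commute)
  also have "\<dots> = (1/2) ^ card U * (\<Sum>T\<in>Pow U. s T *
      (\<Sum>x\<in>vecs m. sgn_bool (lin_form m (xor_vec (xor_sum T id) h) x)))"
    by (simp add: expand sgn_lin_form_xor_vec sum_distrib_left sum_distrib_right mult.assoc
        sum.swap[of _ "vecs m"])
  also have "\<dots> = 0"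
    using nonzero by (simp add: sum_sgn_lin_form)
  finally show ?thesis .
qed

lemma card_cell_fiber:
  assumes "finite U" "finite K" "indep_mod m U K g"
  shows "real (card {x \<in> cell m U c. \<forall>k\<in>K. lin_form m (g k) x = w k}) * 2 ^ card K
    = real (card (cell m U c))"
proof -
  define s where "s R = (\<Prod>k\<in>R. sgn_bool (w k))" for R
  have expand: "(of_bool (\<forall>k\<in>K. lin_form m (g k) x = w k) :: real)
      = (1/2) ^ card K * (\<Sum>R\<in>Pow K. s R * sgn_bool (lin_form m (xor_sum R g) x))" for x
    unfolding of_bool_all_eq_expansion[OF \<open>finite K\<close>] s_def
    using \<open>finite K\<close>
    by (auto simp: prod.distrib prod_sgn_lin_form dest: finite_subset intro!: sum.cong)
  have vanish: "(\<Sum>x\<in>cell m U c. sgn_bool (lin_form m (xor_sum R g) x))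
      = (if R = {} then real (card (cell m U c)) else 0)" if "R \<subseteq> K" for R
  proof (cases "R = {}")
    case True
    then show ?thesis
      by (simp add: lin_form_zero_below zero_below_def sgn_bool_def)
  next
    case False
    with that assms(3) show ?thesis
      unfolding indep_mod_def by (simp add: sum_cell_sgn_lin_form[OF assms(1)])
  qed
  have "real (card {x \<in> cell m U c. \<forall>k\<in>K. lin_form m (g k) x = w k})
      = (\<Sum>x\<in>cell m U c. of_bool (\<forall>k\<in>K. lin_form m (g k) x = w k))"
    by (simp add: Int_def)
  also have "\<dots> = (1/2) ^ card K * (\<Sum>R\<in>Pow K. s R *
      (\<Sum>x\<in>cell m U c. sgn_bool (lin_form m (xor_sum R g) x)))"
    by (simp add: expand sum_distrib_left sum_distrib_right mult.assoc sum.swap[of _ "cell m U c"])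
  also have "\<dots> = (1/2) ^ card K * (\<Sum>R\<in>Pow K. if R = {} then real (card (cell m U c)) else 0)"
    by (intro arg_cong2[where f = "(*)"] sum.cong) (auto simp: vanish s_def)
  also have "\<dots> = (1/2) ^ card K * real (card (cell m U c))"
    using \<open>finite K\<close> by simp
  finally show ?thesis
    by (simp add: field_simps)
qed

lemma card_cell_pattern:
  assumes "finite U" "finite K" "indep_mod m U K g"
  shows "real (card {x \<in> cell m U c. \<Psi> (\<lambda>k\<in>K. lin_form m (g k) x)}) * 2 ^ card K
    = real (card (cell m U c)) * real (card {w \<in> PiE K (\<lambda>_. UNIV). \<Psi> w})"
proof -
  define W where "W = {w \<in> PiE K (\<lambda>_. UNIV). \<Psi> w}"
  define pat where "pat x = (\<lambda>k\<in>K. lin_form m (g k) x)" for x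
  have "finite W"
    using assms(2) by (simp add: W_def finite_PiE)
  have pat_eq: "pat x = w \<longleftrightarrow> (\<forall>k\<in>K. lin_form m (g k) x = w k)" if "w \<in> W" for x w
    using that by (auto simp: W_def pat_def PiE_iff extensional_def fun_eq_iff)
  have fiber: "{x \<in> {x \<in> cell m U c. \<Psi> (pat x)}. pat x = w}
      = {x \<in> cell m U c. \<forall>k\<in>K. lin_form m (g k) x = w k}" if "w \<in> W" for w
    using pat_eq[OF that] that by (auto simp: W_def) metis
  have "real (card {x \<in> cell m U c. \<Psi> (pat x)})
      = (\<Sum>w\<in>W. real (card {x \<in> {x \<in> cell m U c. \<Psi> (pat x)}. pat x = w}))"
    using \<open>finite W\<close> by (intro sum_card_fibers[symmetric]) (auto simp: W_def pat_def)
  also have "\<dots> = (\<Sum>w\<in>W. real (card (cell m U c)) / 2 ^ card K)"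
  proof (intro sum.cong refl)
    fix w assume "w \<in> W"
    show "real (card {x \<in> {x \<in> cell m U c. \<Psi> (pat x)}. pat x = w}) = real (card (cell m U c)) / 2 ^ card K"
      using card_cell_fiber[OF assms, of c w] unfolding fiber[OF \<open>w \<in> W\<close>] by (simp add: field_simps)
  qed
  finally show ?thesis
    by (simp add: W_def pat_def)
qed

lemma bij_betw_curry_PiE:
  "bij_betw (\<lambda>w. \<lambda>i\<in>S. \<lambda>j\<in>J i. w (i, j)) (PiE (Sigma S J) (\<lambda>_. B)) (PiE S (\<lambda>i. PiE (J i) (\<lambda>_. B)))"
  by (rule bij_betw_byWitness[where f' = "\<lambda>h. \<lambda>p\<in>Sigma S J. h (fst p) (snd p)"])
    (auto simp: PiE_iff extensional_def fun_eq_iff split: if_splits)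

lemma card_filter_bij_betw:
  assumes "bij_betw f A B"
  shows "card {a \<in> A. P (f a)} = card {b \<in> B. P b}"
proof -
  have "f ` {a \<in> A. P (f a)} = {b \<in> B. P b}"
    using bij_betw_imp_surj_on[OF assms] by blast
  then show ?thesis
    by (metis (no_types, lifting) assms bij_betw_same_card bij_betw_subset mem_Collect_eq subsetI)
qed

lemma card_PiE_Sigma_filter:
  assumes "finite S"
  shows "card {w \<in> PiE (Sigma S J) (\<lambda>_. B). \<forall>i\<in>S. \<Phi> i (\<lambda>j\<in>J i. w (i, j))}
    = (\<Prod>i\<in>S. card {v \<in> PiE (J i) (\<lambda>_. B). \<Phi> i v})"
proof -
  have "card {w \<in> PiE (Sigma S J) (\<lambda>_. B). \<forall>i\<in>S. \<Phi> i (\<lambda>j\<in>J i. w (i, j))}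
      = card {h \<in> PiE S (\<lambda>i. PiE (J i) (\<lambda>_. B)). \<forall>i\<in>S. \<Phi> i (h i)}"
    using card_filter_bij_betw[OF bij_betw_curry_PiE, of S J B "\<lambda>h. \<forall>i\<in>S. \<Phi> i (h i)"]
    by simp
  also have "{h \<in> PiE S (\<lambda>i. PiE (J i) (\<lambda>_. B)). \<forall>i\<in>S. \<Phi> i (h i)}
      = PiE S (\<lambda>i. {v \<in> PiE (J i) (\<lambda>_. B). \<Phi> i v})"
    by (auto simp: PiE_iff extensional_def)
  also have "card \<dots> = (\<Prod>i\<in>S. card {v \<in> PiE (J i) (\<lambda>_. B). \<Phi> i v})"
    using assms by (rule card_PiE)
  finally show ?thesis .
qed

lemma card_cell_juntas:
  assumes "finite U" "finite S" "\<And>i. i \<in> S \<Longrightarrow> finite (J i)"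
    and "indep_mod m U (Sigma S J) (\<lambda>(i, j). f i j)"
  shows "real (card {x \<in> cell m U c. \<forall>i\<in>S. G i (\<lambda>j\<in>J i. lin_form m (f i j) x) = z i})
      * (\<Prod>i\<in>S. 2 ^ card (J i))
    = real (card (cell m U c)) * (\<Prod>i\<in>S. real (card {v \<in> PiE (J i) (\<lambda>_. UNIV). G i v = z i}))"
proof -
  define \<Psi> where "\<Psi> w \<longleftrightarrow> (\<forall>i\<in>S. G i (\<lambda>j\<in>J i. w (i, j)) = z i)" for w
  have fin: "finite (Sigma S J)"
    using assms(2,3) by auto
  have restr: "(\<lambda>j\<in>J i. (\<lambda>k\<in>Sigma S J. lin_form m (case k of (i, j) \<Rightarrow> f i j) x) (i, j))
      = (\<lambda>j\<in>J i. lin_form m (f i j) x)" if "i \<in> S" for i x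
    using that by (auto simp: fun_eq_iff)
  have "\<Psi> (\<lambda>k\<in>Sigma S J. lin_form m (case k of (i, j) \<Rightarrow> f i j) x)
      \<longleftrightarrow> (\<forall>i\<in>S. G i (\<lambda>j\<in>J i. lin_form m (f i j) x) = z i)" for x
    unfolding \<Psi>_def by (intro ball_cong refl) (simp only: restr)
  then have "{x \<in> cell m U c. \<forall>i\<in>S. G i (\<lambda>j\<in>J i. lin_form m (f i j) x) = z i}
      = {x \<in> cell m U c. \<Psi> (\<lambda>k\<in>Sigma S J. lin_form m (case k of (i, j) \<Rightarrow> f i j) x)}"
    by simp
  moreover have "card {w \<in> PiE (Sigma S J) (\<lambda>_. UNIV). \<Psi> w}
      = (\<Prod>i\<in>S. card {v \<in> PiE (J i) (\<lambda>_. UNIV). G i v = z i})"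
    unfolding \<Psi>_def using assms(2) by (rule card_PiE_Sigma_filter)
  moreover have "(2::real) ^ card (Sigma S J) = (\<Prod>i\<in>S. 2 ^ card (J i))"
    using assms(2,3) by (simp add: power_sum)
  ultimately show ?thesis
    using card_cell_pattern[OF assms(1) fin assms(4), of c \<Psi>] by simp
qed

lemma card_cell_outputs_indep:
  fixes J :: "nat \<Rightarrow> nat set" and f :: "nat \<Rightarrow> nat \<Rightarrow> nat \<Rightarrow> bool"
  assumes "finite U" "finite S" "\<And>i. i \<in> S \<Longrightarrow> finite (J i)"
    and rep: "\<And>i x. i \<in> S \<Longrightarrow> x \<in> cell m U c \<Longrightarrow> P i x = G i (\<lambda>j\<in>J i. lin_form m (f i j) x)"
    and indep: "indep_mod m U (Sigma S J) (\<lambda>(i, j). f i j)"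
  shows "real (card {x \<in> cell m U c. \<forall>i\<in>S. P i x = z i}) = real (card (cell m U c))
    * (\<Prod>i\<in>S. real (card {v \<in> PiE (J i) (\<lambda>_. UNIV). G i v = z i}) / 2 ^ card (J i))"
proof -
  have "{x \<in> cell m U c. \<forall>i\<in>S. P i x = z i}
      = {x \<in> cell m U c. \<forall>i\<in>S. G i (\<lambda>j\<in>J i. lin_form m (f i j) x) = z i}"
    using rep by auto
  moreover have "(\<Prod>i\<in>S. (2::real) ^ card (J i)) > 0"
    by (rule prod_pos) simp
  ultimately show ?thesis
    using card_cell_juntas[OF assms(1-3) indep, of c G z]
    by (simp add: prod_dividef field_simps)
qed

section \<open>Overlap with the product Bernoulli distribution\<close>

definition outputs :: "nat \<Rightarrow> (nat \<Rightarrow> bool list \<Rightarrow> bool) \<Rightarrow> bool list \<Rightarrow> bool list" where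
  "outputs n P x = map (\<lambda>i. P i x) [0..<n]"

definition overlap :: "bool list set \<Rightarrow> nat \<Rightarrow> (nat \<Rightarrow> bool list \<Rightarrow> bool) \<Rightarrow> real" where
  "overlap A n P =
    (\<Sum>y\<in>vecs n. min (real (card {x \<in> A. outputs n P x = y}) / real (card A)) (ber13 y))"

definition ber13_coord :: "bool \<Rightarrow> real" where
  "ber13_coord b = (if b then 1/3 else 2/3)"

lemma outputs_in_vecs: "outputs n P x \<in> vecs n"
  by (simp add: outputs_def vecs_def)

lemma ber13_eq_prod: "y \<in> vecs n \<Longrightarrow> ber13 y = (\<Prod>i<n. ber13_coord (y ! i))"
  unfolding vecs_def
proof (induction y arbitrary: n)
  case (Cons b y)
  then have "n = Suc (length y)"
    by simp
  then show ?case
    using Cons.IH[of "length y"]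
    by (simp del: prod.lessThan_Suc add: prod.lessThan_Suc_shift ber13_def ber13_coord_def)
qed (simp add: ber13_def)

lemma ber13_nonneg: "0 \<le> ber13 y"
  unfolding ber13_def by (induction y) auto

lemma sum_ber13: "(\<Sum>y\<in>vecs n. ber13 y) = 1"
proof -
  have "(\<Sum>y\<in>vecs n. ber13 y) = (\<Sum>y\<in>vecs n. \<Prod>i<n. ber13_coord (y ! i))"
    by (intro sum.cong refl) (simp add: ber13_eq_prod)
  also have "\<dots> = (\<Prod>i<n. ber13_coord True + ber13_coord False)"
    by (rule sum_vecs_prod)
  finally show ?thesis
    by (simp add: ber13_coord_def)
qed

lemma sum_ber13_marginal:
  assumes S: "S \<subseteq> {..<n}" and z: "z \<in> PiE S (\<lambda>_. UNIV)"
  shows "(\<Sum>y\<in>{y \<in> vecs n. (\<lambda>i\<in>S. y ! i) = z}. ber13 y) = (\<Prod>i\<in>S. ber13_coord (z i))"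
proof -
  define h where "h i b = ber13_coord b * (if i \<in> S then of_bool (b = z i) else 1)" for i b
  have restr_eq: "(\<lambda>i\<in>S. y ! i) = z \<longleftrightarrow> (\<forall>i\<in>S. y ! i = z i)" for y
    using z by (auto simp: PiE_iff extensional_def fun_eq_iff)
  have indicator: "(\<Prod>i<n. if i \<in> S then of_bool (y ! i = z i) else 1 :: real)
      = of_bool (\<forall>i\<in>S. y ! i = z i)" for y
  proof -
    have "(\<Prod>i<n. if i \<in> S then of_bool (y ! i = z i) else 1 :: real) = (\<Prod>i\<in>S. of_bool (y ! i = z i))"
      using S by (simp add: prod.If_cases Int_absorb1)
    also have "\<dots> = of_bool (\<forall>i\<in>S. y ! i = z i)"
      using finite_subset[OF S] by (induction S rule: finite_induct) auto
    finally show ?thesis .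
  qed
  have "(\<Sum>y\<in>{y \<in> vecs n. (\<lambda>i\<in>S. y ! i) = z}. ber13 y)
      = (\<Sum>y\<in>vecs n. ber13 y * of_bool (\<forall>i\<in>S. y ! i = z i))"
    by (simp add: restr_eq Int_def)
  also have "\<dots> = (\<Sum>y\<in>vecs n. \<Prod>i<n. h i (y ! i))"
    by (intro sum.cong refl) (simp add: h_def prod.distrib ber13_eq_prod indicator)
  also have "\<dots> = (\<Prod>i<n. h i True + h i False)"
    by (rule sum_vecs_prod)
  also have "\<dots> = (\<Prod>i<n. if i \<in> S then ber13_coord (z i) else 1)"
    by (intro prod.cong refl) (auto simp: h_def ber13_coord_def)
  also have "\<dots> = (\<Prod>i\<in>S. ber13_coord (z i))"
    using S by (simp add: prod.If_cases Int_absorb1)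
  finally show ?thesis .
qed

lemma tv_dist_eq_1_minus_overlap: "tv_dist (vecs n) (distP m n P) ber13 = 1 - overlap (vecs m) n P"
proof -
  have distP_eq: "distP m n P y = real (card {x \<in> vecs m. outputs n P x = y}) / real (card (vecs m))" for y
    by (simp add: distP_def outputs_def card_vecs)
  have "(\<Sum>y\<in>vecs n. distP m n P y) = (\<Sum>y\<in>vecs n. real (card {x \<in> vecs m. outputs n P x = y})) / 2 ^ m"
    by (simp add: distP_eq card_vecs sum_divide_distrib)
  also have "\<dots> = 1"
    by (subst sum_card_fibers) (auto simp: outputs_in_vecs card_vecs)
  finally have sum_distP: "(\<Sum>y\<in>vecs n. distP m n P y) = 1" .
  have "\<bar>a - b\<bar> = a + b - 2 * min a b" for a b :: real
    by (simp add: min_def)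
  then have "tv_dist (vecs n) (distP m n P) ber13 = (1/2) * ((\<Sum>y\<in>vecs n. distP m n P y)
      + (\<Sum>y\<in>vecs n. ber13 y) - 2 * (\<Sum>y\<in>vecs n. min (distP m n P y) (ber13 y)))"
    by (simp add: tv_dist_def sum.distrib sum_subtractf sum_distrib_left)
  also have "\<dots> = 1 - (\<Sum>y\<in>vecs n. min (distP m n P y) (ber13 y))"
    by (simp add: sum_distP sum_ber13)
  finally show ?thesis
    by (simp add: overlap_def distP_eq)
qed

lemma min_sum_le_sum_min:
  fixes a :: "'i \<Rightarrow> real"
  assumes "\<And>i. i \<in> I \<Longrightarrow> 0 \<le> a i" "0 \<le> q"
  shows "min (\<Sum>i\<in>I. a i) q \<le> (\<Sum>i\<in>I. min (a i) q)"
  using assms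
proof (induction I rule: infinite_finite_induct)
  case (insert i I)
  have "0 \<le> (\<Sum>i\<in>I. a i)" "0 \<le> a i"
    using insert.prems by (auto intro: sum_nonneg)
  then have "min (a i + (\<Sum>i\<in>I. a i)) q \<le> min (a i) q + min (\<Sum>i\<in>I. a i) q"
    using \<open>0 \<le> q\<close> by (auto simp: min_def)
  with insert show ?case
    by simp
qed auto

lemma sum_min_le_sum_min_fibers:
  fixes f g :: "'y \<Rightarrow> real"
  assumes "finite Y" "finite Z" "p ` Y \<subseteq> Z"
  shows "(\<Sum>y\<in>Y. min (f y) (g y))
    \<le> (\<Sum>z\<in>Z. min (\<Sum>y\<in>{y \<in> Y. p y = z}. f y) (\<Sum>y\<in>{y \<in> Y. p y = z}. g y))"
proof -
  have "(\<Sum>y\<in>Y. min (f y) (g y)) = (\<Sum>z\<in>Z. \<Sum>y\<in>{y \<in> Y. p y = z}. min (f y) (g y))"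
    using assms by (intro sum.group[symmetric]) auto
  also have "\<dots> \<le> (\<Sum>z\<in>Z. min (\<Sum>y\<in>{y \<in> Y. p y = z}. f y) (\<Sum>y\<in>{y \<in> Y. p y = z}. g y))"
    by (intro sum_mono min.boundedI) (auto intro: sum_mono)
  finally show ?thesis .
qed

lemma overlap_le_marginal:
  assumes "finite A" "S \<subseteq> {..<n}"
  shows "overlap A n P \<le> (\<Sum>z\<in>PiE S (\<lambda>_. UNIV).
    min (real (card {x \<in> A. \<forall>i\<in>S. P i x = z i}) / real (card A)) (\<Prod>i\<in>S. ber13_coord (z i)))"
proof -
  define proj where "proj y = (\<lambda>i\<in>S. y ! i)" for y :: "bool list"
  define Z where "Z = PiE S (\<lambda>_. UNIV :: bool set)"
  have "finite Z"
    using assms(2) by (simp add: Z_def finite_PiE finite_subset)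
  have "outputs n P x ! i = P i x" if "i \<in> S" for x i
    using that assms(2) by (auto simp: outputs_def)
  then have proj_outputs: "proj (outputs n P x) = z \<longleftrightarrow> (\<forall>i\<in>S. P i x = z i)" if "z \<in> Z" for x z
    using that by (auto simp: Z_def proj_def PiE_iff extensional_def fun_eq_iff)
  have fiber: "(\<Sum>y\<in>{y \<in> vecs n. proj y = z}. real (card {x \<in> A. outputs n P x = y}) / real (card A))
      = real (card {x \<in> A. \<forall>i\<in>S. P i x = z i}) / real (card A)" if "z \<in> Z" for z
  proof -
    have "(\<Sum>y\<in>{y \<in> vecs n. proj y = z}. real (card {x \<in> A. outputs n P x = y}))
        = (\<Sum>y\<in>{y \<in> vecs n. proj y = z}. real (card {x \<in> {x \<in> A. proj (outputs n P x) = z}. outputs n P x = y}))"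
      by (intro sum.cong refl arg_cong[where f = "\<lambda>X. real (card X)"]) auto
    also have "\<dots> = real (card {x \<in> A. proj (outputs n P x) = z})"
      using assms(1) by (intro sum_card_fibers) (auto simp: outputs_in_vecs)
    finally show ?thesis
      using proj_outputs[OF that] by (simp add: sum_divide_distrib[symmetric])
  qed
  have "overlap A n P \<le> (\<Sum>z\<in>Z.
      min (\<Sum>y\<in>{y \<in> vecs n. proj y = z}. real (card {x \<in> A. outputs n P x = y}) / real (card A))
          (\<Sum>y\<in>{y \<in> vecs n. proj y = z}. ber13 y))"
    unfolding overlap_def using \<open>finite Z\<close>
    by (intro sum_min_le_sum_min_fibers) (auto simp: Z_def proj_def)
  also have "\<dots> = (\<Sum>z\<in>Z.
      min (real (card {x \<in> A. \<forall>i\<in>S. P i x = z i}) / real (card A)) (\<Prod>i\<in>S. ber13_coord (z i)))"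
  proof (intro sum.cong refl)
    fix z assume z: "z \<in> Z"
    then show "min (\<Sum>y\<in>{y \<in> vecs n. proj y = z}. real (card {x \<in> A. outputs n P x = y}) / real (card A))
          (\<Sum>y\<in>{y \<in> vecs n. proj y = z}. ber13 y)
        = min (real (card {x \<in> A. \<forall>i\<in>S. P i x = z i}) / real (card A)) (\<Prod>i\<in>S. ber13_coord (z i))"
      using fiber[OF z] sum_ber13_marginal[OF assms(2), of z] by (simp add: Z_def proj_def)
  qed
  finally show ?thesis
    by (simp add: Z_def)
qed

lemma overlap_le_sum_fibers:
  assumes "finite A"
  shows "overlap A n P \<le> (\<Sum>c\<in>\<kappa> ` A. overlap {x \<in> A. \<kappa> x = c} n P)"
proof -
  define A' where "A' c = {x \<in> A. \<kappa> x = c}" for c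
  define N where "N c y = real (card {x \<in> A' c. outputs n P x = y})" for c y
  have split: "real (card {x \<in> A. outputs n P x = y}) = (\<Sum>c\<in>\<kappa> ` A. N c y)" for y
  proof -
    have "real (card {x \<in> A. outputs n P x = y})
        = (\<Sum>c\<in>\<kappa> ` A. real (card {x \<in> {x \<in> A. outputs n P x = y}. \<kappa> x = c}))"
      using assms by (intro sum_card_fibers[symmetric]) auto
    also have "\<dots> = (\<Sum>c\<in>\<kappa> ` A. N c y)"
      unfolding N_def A'_def by (intro sum.cong refl arg_cong[where f = "\<lambda>X. real (card X)"]) auto
    finally show ?thesis .
  qed
  have shrink: "N c y / real (card A) \<le> N c y / real (card (A' c))" for c y
  proof (cases "card (A' c) = 0")
    case False
    have "card (A' c) \<le> card A"
      using assms by (intro card_mono) (auto simp: A'_def)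
    with False show ?thesis
      by (intro divide_left_mono) (auto simp: N_def)
  next
    case True
    then have "A' c = {}"
      using assms by (simp add: A'_def)
    then show ?thesis
      by (simp add: N_def)
  qed
  have "overlap A n P = (\<Sum>y\<in>vecs n. min (\<Sum>c\<in>\<kappa> ` A. N c y / real (card A)) (ber13 y))"
    by (simp add: overlap_def split sum_divide_distrib)
  also have "\<dots> \<le> (\<Sum>y\<in>vecs n. \<Sum>c\<in>\<kappa> ` A. min (N c y / real (card (A' c))) (ber13 y))"
    by (intro sum_mono order.trans[OF min_sum_le_sum_min] min.mono shrink order.refl)
      (auto simp: N_def ber13_nonneg)
  also have "\<dots> = (\<Sum>c\<in>\<kappa> ` A. overlap (A' c) n P)"
    by (subst sum.swap) (simp add: overlap_def N_def)
  finally show ?thesis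
    by (simp add: A'_def)
qed

section \<open>Bhattacharyya bounds\<close>

lemma min_le_sqrt_mult:
  fixes a b :: real
  assumes "0 \<le> a" "0 \<le> b"
  shows "min a b \<le> sqrt (a * b)"
proof -
  have "min a b * min a b \<le> a * b"
    using assms by (intro mult_mono) auto
  then have "sqrt (min a b * min a b) \<le> sqrt (a * b)"
    by (rule real_sqrt_le_mono)
  then show ?thesis
    using assms by simp
qed

lemma real_sqrt_prod: "sqrt (\<Prod>i\<in>S. f i) = (\<Prod>i\<in>S. sqrt (f i))"
  by (induction S rule: infinite_finite_induct) (simp_all add: real_sqrt_mult)

lemma sum_min_prod_le_prod_sum_sqrt:
  fixes p q :: "'i \<Rightarrow> 'b::finite \<Rightarrow> real"
  assumes "finite S" "\<And>i b. 0 \<le> p i b" "\<And>i b. 0 \<le> q i b"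
  shows "(\<Sum>z\<in>PiE S (\<lambda>_. UNIV). min (\<Prod>i\<in>S. p i (z i)) (\<Prod>i\<in>S. q i (z i)))
    \<le> (\<Prod>i\<in>S. \<Sum>b\<in>UNIV. sqrt (p i b * q i b))"
proof -
  have "(\<Sum>z\<in>PiE S (\<lambda>_. UNIV). min (\<Prod>i\<in>S. p i (z i)) (\<Prod>i\<in>S. q i (z i)))
      \<le> (\<Sum>z\<in>PiE S (\<lambda>_. UNIV). \<Prod>i\<in>S. sqrt (p i (z i) * q i (z i)))"
  proof (rule sum_mono)
    fix z :: "'i \<Rightarrow> 'b"
    have "min (\<Prod>i\<in>S. p i (z i)) (\<Prod>i\<in>S. q i (z i))
        \<le> sqrt ((\<Prod>i\<in>S. p i (z i)) * (\<Prod>i\<in>S. q i (z i)))"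
      using assms by (intro min_le_sqrt_mult prod_nonneg) auto
    also have "\<dots> = (\<Prod>i\<in>S. sqrt (p i (z i) * q i (z i)))"
      by (simp add: prod.distrib[symmetric] real_sqrt_prod)
    finally show "min (\<Prod>i\<in>S. p i (z i)) (\<Prod>i\<in>S. q i (z i)) \<le> \<dots>" .
  qed
  also have "\<dots> = (\<Prod>i\<in>S. \<Sum>b\<in>UNIV. sqrt (p i b * q i b))"
    using assms(1) by (intro prod_sum_PiE[symmetric]) auto
  finally show ?thesis .
qed

lemma bhattacharyya_two_point_le:
  fixes p q :: real
  assumes "0 \<le> p" "p \<le> 1" "0 \<le> q" "q \<le> 1"
  shows "sqrt (p * q) + sqrt ((1 - p) * (1 - q)) \<le> 1 - (p - q)\<^sup>2 / 8"
proof -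
  define s t u v where "s = sqrt p" "t = sqrt q" "u = sqrt (1 - p)" "v = sqrt (1 - q)"
  have squares: "s\<^sup>2 = p" "t\<^sup>2 = q" "u\<^sup>2 = 1 - p" "v\<^sup>2 = 1 - q"
    using assms by (auto simp: s_t_u_v_def)
  have "0 \<le> s" "s \<le> 1" "0 \<le> t" "t \<le> 1"
    using assms by (auto simp: s_t_u_v_def)
  then have "(s + t)\<^sup>2 \<le> 2\<^sup>2"
    by (intro power_mono) auto
  have "(p - q)\<^sup>2 = (s - t)\<^sup>2 * (s + t)\<^sup>2"
    using squares by (simp add: power2_eq_square algebra_simps)
  also have "\<dots> \<le> (s - t)\<^sup>2 * 2\<^sup>2"
    using \<open>(s + t)\<^sup>2 \<le> 2\<^sup>2\<close> by (rule mult_left_mono) simp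
  finally have "(p - q)\<^sup>2 \<le> 4 * (s - t)\<^sup>2"
    by simp
  moreover have "sqrt (p * q) + sqrt ((1 - p) * (1 - q)) = s * t + u * v"
    by (simp add: s_t_u_v_def real_sqrt_mult)
  moreover have "s * t + u * v = 1 - (s - t)\<^sup>2 / 2 - (u - v)\<^sup>2 / 2"
    using squares by (simp add: power2_eq_square field_simps)
  moreover have "0 \<le> (u - v)\<^sup>2"
    by simp
  ultimately show ?thesis
    by linarith
qed

lemma pow2_mod3_neq0: "(2::nat) ^ k mod 3 \<noteq> 0"
  by (induction k) (simp_all, presburger)

lemma bhattacharyya_dyadic_third_le:
  fixes a k r :: nat
  assumes "a \<le> 2 ^ k" "k \<le> r"
  shows "sqrt (real a / 2 ^ k * (1/3)) + sqrt ((1 - real a / 2 ^ k) * (2/3)) \<le> 1 - 1 / 2 ^ (2 * r + 7)"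
proof -
  define p where "p = real a / 2 ^ k"
  have "0 \<le> p" "p \<le> 1"
    using assms by (auto simp: p_def)
  then have bc: "sqrt (p * (1/3)) + sqrt ((1 - p) * (1 - 1/3)) \<le> 1 - (p - 1/3)\<^sup>2 / 8"
    by (intro bhattacharyya_two_point_le) auto
  have "3 * a \<noteq> 2 ^ k"
    using pow2_mod3_neq0[of k] by (metis mod_mult_self1_is_0)
  then have "int (3 * a) - int (2 ^ k) \<noteq> 0"
    by (simp only: right_minus_eq of_nat_eq_iff) simp
  then have "(1::int) \<le> (int (3 * a) - int (2 ^ k))\<^sup>2"
    by (simp only: int_one_le_iff_zero_less zero_less_power2 not_False_eq_True)
  then have "1 \<le> (3 * real a - 2 ^ k)\<^sup>2"
    by (metis (mono_tags, opaque_lifting) of_int_1 of_int_diff of_int_le_iff of_int_of_nat_eq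
        of_int_power of_nat_mult of_nat_numeral of_nat_power)
  moreover have "(p - 1/3)\<^sup>2 = (3 * real a - 2 ^ k)\<^sup>2 / (9 * 4 ^ k)"
    by (simp add: p_def field_simps power2_eq_square power_mult_distrib[symmetric])
  ultimately have "1 / (9 * 4 ^ k) \<le> (p - 1/3)\<^sup>2"
    by (simp add: divide_right_mono)
  have "(9::real) * 4 ^ k * 8 \<le> 2 ^ (2 * r + 7)"
  proof -
    have "(4::real) ^ k \<le> 4 ^ r"
      using assms(2) by (intro power_increasing) auto
    moreover have "(2::real) ^ (2 * r + 7) = 128 * 4 ^ r"
      by (simp add: power_add power_mult)
    moreover have "(0::real) \<le> 4 ^ r"
      by simp
    ultimately show ?thesis
      by linarith
  qed
  then have "1 / 2 ^ (2 * r + 7) \<le> (1::real) / (9 * 4 ^ k * 8)"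
    by (intro divide_left_mono) auto
  also have "\<dots> = 1 / (9 * 4 ^ k) / 8"
    by simp
  also have "\<dots> \<le> (p - 1/3)\<^sup>2 / 8"
    using \<open>1 / (9 * 4 ^ k) \<le> (p - 1/3)\<^sup>2\<close> by (rule divide_right_mono) simp
  finally have "1 / 2 ^ (2 * r + 7) \<le> (p - 1/3)\<^sup>2 / 8" .
  with bc show ?thesis
    by (simp add: p_def)
qed

text \<open>The bias of a function of at most \<open>r\<close> uniform bits is a dyadic rational with denominator at
  most \<open>2^r\<close>, so it differs from \<open>1/3\<close> by at least \<open>2^-r/3\<close>.\<close>
lemma bhattacharyya_junta_le:
  fixes G :: "('a \<Rightarrow> bool) \<Rightarrow> bool"
  assumes "finite J" "card J \<le> r"
  shows "(\<Sum>b\<in>UNIV. sqrt (real (card {v \<in> PiE J (\<lambda>_. UNIV). G v = b}) / 2 ^ card J * ber13_coord b))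
    \<le> 1 - 1 / 2 ^ (2 * r + 7)"
proof -
  define a where "a b = card {v \<in> PiE J (\<lambda>_. UNIV). G v = b}" for b
  have "(\<Sum>b\<in>UNIV. real (a b)) = real (card (PiE J (\<lambda>_. UNIV :: bool set)))"
    unfolding a_def using assms(1) by (intro sum_card_fibers) (auto simp: finite_PiE)
  then have split: "real (a True) + real (a False) = 2 ^ card J"
    using assms(1) by (simp add: UNIV_bool card_PiE)
  then have "a True \<le> 2 ^ card J"
    by (metis le_add1 of_nat_add of_nat_eq_iff of_nat_numeral of_nat_power)
  have a_False: "real (a False) / 2 ^ card J = 1 - real (a True) / 2 ^ card J"
    using split by (simp add: field_simps)
  have sum_bool: "(\<Sum>b\<in>UNIV. g b) = g True + g False" for g :: "bool \<Rightarrow> real"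
    by (simp add: UNIV_bool add.commute)
  have "(\<Sum>b\<in>UNIV. sqrt (real (a b) / 2 ^ card J * ber13_coord b))
      = sqrt (real (a True) / 2 ^ card J * (1/3)) + sqrt ((1 - real (a True) / 2 ^ card J) * (2/3))"
    by (simp only: sum_bool a_False ber13_coord_def if_True if_False)
  also have "\<dots> \<le> 1 - 1 / 2 ^ (2 * r + 7)"
    using \<open>a True \<le> 2 ^ card J\<close> assms(2) by (rule bhattacharyya_dyadic_third_le)
  finally show ?thesis
    by (simp only: a_def)
qed

text \<open>On the cell the \<open>P i\<close>, \<open>i \<in> S\<close>, are independent, so after projecting to the coordinates
  in \<open>S\<close> both distributions are products and the overlap factorises.\<close>
lemma overlap_cell_le_of_indep:
  fixes J :: "nat \<Rightarrow> nat set" and f :: "nat \<Rightarrow> nat \<Rightarrow> nat \<Rightarrow> bool"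
  assumes "finite U" "S \<subseteq> {..<n}"
    and J: "\<And>i. i \<in> S \<Longrightarrow> finite (J i) \<and> card (J i) \<le> r"
    and rep: "\<And>i x. i \<in> S \<Longrightarrow> x \<in> cell m U c \<Longrightarrow> P i x = G i (\<lambda>j\<in>J i. lin_form m (f i j) x)"
    and indep: "indep_mod m U (Sigma S J) (\<lambda>(i, j). f i j)"
  shows "overlap (cell m U c) n P \<le> (1 - 1 / 2 ^ (2 * r + 7)) ^ card S"
proof -
  define A where "A = cell m U c"
  define p where "p i b = real (card {v \<in> PiE (J i) (\<lambda>_. UNIV). G i v = b}) / 2 ^ card (J i)" for i b
  have "finite S"
    using assms(2) finite_subset by blast
  have marginal: "real (card {x \<in> A. \<forall>i\<in>S. P i x = z i}) / real (card A) \<le> (\<Prod>i\<in>S. p i (z i))" for z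
    using card_cell_outputs_indep[where J = J and P = P and z = z, OF assms(1) \<open>finite S\<close> _ rep indep] J
    by (cases "card A = 0") (simp_all add: A_def p_def prod_nonneg)
  have "overlap A n P \<le> (\<Sum>z\<in>PiE S (\<lambda>_. UNIV).
      min (real (card {x \<in> A. \<forall>i\<in>S. P i x = z i}) / real (card A)) (\<Prod>i\<in>S. ber13_coord (z i)))"
    unfolding A_def using assms(2) by (intro overlap_le_marginal) auto
  also have "\<dots> \<le> (\<Sum>z\<in>PiE S (\<lambda>_. UNIV). min (\<Prod>i\<in>S. p i (z i)) (\<Prod>i\<in>S. ber13_coord (z i)))"
    by (intro sum_mono min.mono marginal order.refl)
  also have "\<dots> \<le> (\<Prod>i\<in>S. \<Sum>b\<in>UNIV. sqrt (p i b * ber13_coord b))"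
    using \<open>finite S\<close> by (intro sum_min_prod_le_prod_sum_sqrt) (auto simp: p_def ber13_coord_def)
  also have "\<dots> \<le> (\<Prod>i\<in>S. 1 - 1 / 2 ^ (2 * r + 7))"
  proof (intro prod_mono conjI)
    fix i assume "i \<in> S"
    show "0 \<le> (\<Sum>b\<in>UNIV. sqrt (p i b * ber13_coord b))"
      by (intro sum_nonneg) (simp add: p_def ber13_coord_def)
    show "(\<Sum>b\<in>UNIV. sqrt (p i b * ber13_coord b)) \<le> 1 - 1 / 2 ^ (2 * r + 7)"
      unfolding p_def using J[OF \<open>i \<in> S\<close>] by (intro bhattacharyya_junta_le) auto
  qed
  finally show ?thesis
    by (simp add: A_def)
qed

section \<open>Refining cells lowers the rank\<close>

definition rank_le_on :: "nat \<Rightarrow> bool list set \<Rightarrow> nat \<Rightarrow> (bool list \<Rightarrow> bool) \<Rightarrow> bool" where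
  "rank_le_on m A r Q \<longleftrightarrow> (\<exists>(J::nat set) (f::nat \<Rightarrow> nat \<Rightarrow> bool) (G::(nat \<Rightarrow> bool) \<Rightarrow> bool).
    finite J \<and> card J \<le> r \<and> (\<forall>x\<in>A. Q x = G (\<lambda>j\<in>J. lin_form m (f j) x)))"

definition form_values :: "nat \<Rightarrow> (nat \<Rightarrow> bool) set \<Rightarrow> bool list \<Rightarrow> (nat \<Rightarrow> bool) \<Rightarrow> bool" where
  "form_values m U x = (\<lambda>u\<in>U. lin_form m u x)"

lemma cell_fiber_form_values:
  assumes "U \<subseteq> U'" "x0 \<in> cell m U c"
  shows "{x \<in> cell m U c. form_values m U' x = form_values m U' x0} = cell m U' (form_values m U' x0)"
  using assms by (auto simp: cell_def form_values_def fun_eq_iff)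

lemma cell_form_values_subset:
  assumes "U \<subseteq> U'" "c' \<in> form_values m U' ` cell m U c"
  shows "cell m U' c' \<subseteq> cell m U c"
proof -
  obtain x0 where "x0 \<in> cell m U c" "c' = form_values m U' x0"
    using assms(2) by blast
  then have "cell m U' c' = {x \<in> cell m U c. form_values m U' x = c'}"
    using cell_fiber_form_values[OF assms(1)] by simp
  then show ?thesis
    by auto
qed

lemma card_form_values_image_le:
  assumes "U \<subseteq> U'" "finite U'"
  shows "card (form_values m U' ` cell m U c) \<le> 2 ^ card (U' - U)"
proof -
  define H where "H = form_values m U' ` cell m U c"
  have "inj_on (\<lambda>h. restrict h (U' - U)) H"
  proof (rule inj_onI)
    fix h1 h2 assume h: "h1 \<in> H" "h2 \<in> H" "restrict h1 (U' - U) = restrict h2 (U' - U)"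
    show "h1 = h2"
    proof
      fix u
      show "h1 u = h2 u"
      proof (cases "u \<in> U' - U")
        case True
        then show ?thesis
          using h(3) by (metis restrict_apply')
      next
        case False
        then show ?thesis
          using h(1,2) assms(1) by (auto simp: H_def form_values_def cell_def)
      qed
    qed
  qed
  then have "card H = card ((\<lambda>h. restrict h (U' - U)) ` H)"
    by (rule card_image[symmetric])
  also have "\<dots> \<le> card (PiE (U' - U) (\<lambda>_. UNIV :: bool set))"
    using assms(2) by (intro card_mono) (auto simp: finite_PiE)
  also have "\<dots> = 2 ^ card (U' - U)"
    using assms(2) by (simp add: card_PiE)
  finally show ?thesis
    by (simp add: H_def)
qed

lemma overlap_cell_le_sum_refined:
  assumes "U \<subseteq> U'"
  shows "overlap (cell m U c) n P \<le> (\<Sum>c'\<in>form_values m U' ` cell m U c. overlap (cell m U' c') n P)"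
proof -
  have "{x \<in> cell m U c. form_values m U' x = c'} = cell m U' c'"
    if "c' \<in> form_values m U' ` cell m U c" for c'
    using that cell_fiber_form_values[OF assms] by auto
  then show ?thesis
    using overlap_le_sum_fibers[of "cell m U c" n P "form_values m U'"] by simp
qed

lemma rank_le_on_cell_of_forms_in:
  fixes J :: "nat set" and f :: "nat \<Rightarrow> nat \<Rightarrow> bool"
  assumes "\<forall>j\<in>J. f j \<in> U" "\<forall>x\<in>cell m U c. Q x = G (\<lambda>j\<in>J. lin_form m (f j) x)"
  shows "rank_le_on m (cell m U c) r Q"
proof -
  have "(\<lambda>j\<in>J. lin_form m (f j) x) = (\<lambda>j\<in>J. c (f j))" if "x \<in> cell m U c" for x
    using assms(1) that by (auto simp: cell_def intro!: restrict_ext)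
  then have "\<forall>x\<in>cell m U c. Q x = G (\<lambda>j\<in>J. c (f j))"
    using assms(2) by simp
  then show ?thesis
    unfolding rank_le_on_def by (intro exI[of _ "{}"] exI[of _ f]) auto
qed

lemma rank_le_on_eliminate:
  fixes J :: "nat set" and f :: "nat \<Rightarrow> nat \<Rightarrow> bool"
  assumes "finite J" "card J \<le> Suc r" "j0 \<in> J" "R \<subseteq> J - {j0}"
    and rep: "\<forall>x\<in>A. Q x = G (\<lambda>j\<in>J. lin_form m (f j) x)"
    and rel: "\<forall>x\<in>A. lin_form m (f j0) x = (\<kappa> \<noteq> parity R (\<lambda>j. lin_form m (f j) x))"
  shows "rank_le_on m A r Q"
proof -
  define G' where "G' v = G (\<lambda>j\<in>J. if j = j0 then \<kappa> \<noteq> parity R v else v j)" for v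
  have "Q x = G' (\<lambda>j\<in>J - {j0}. lin_form m (f j) x)" if "x \<in> A" for x
  proof -
    have "parity R (\<lambda>j\<in>J - {j0}. lin_form m (f j) x) = parity R (\<lambda>j. lin_form m (f j) x)"
      using assms(4) by (intro parity_cong) auto
    then have "(\<lambda>j\<in>J. if j = j0 then \<kappa> \<noteq> parity R (\<lambda>j\<in>J - {j0}. lin_form m (f j) x)
        else (\<lambda>j\<in>J - {j0}. lin_form m (f j) x) j) = (\<lambda>j\<in>J. lin_form m (f j) x)"
      using rel that by (auto simp: fun_eq_iff)
    then show ?thesis
      using rep that by (simp add: G'_def)
  qed
  then show ?thesis
    unfolding rank_le_on_def using assms(1-3)
    by (intro exI[of _ "J - {j0}"] exI[of _ f] exI[of _ G']) auto
qed

lemma parity_lin_forms_on_cell: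
  assumes "zero_below m (xor_vec (xor_sum T id) (xor_sum R g))" "finite T" "finite R" "T \<subseteq> U"
    and "x \<in> cell m U c"
  shows "parity R (\<lambda>k. lin_form m (g k) x) = parity T c"
proof -
  have "\<not> lin_form m (xor_vec (xor_sum T id) (xor_sum R g)) x"
    using assms(1) by (rule lin_form_zero_below)
  then have "parity R (\<lambda>k. lin_form m (g k) x) = parity T (\<lambda>u. lin_form m u x)"
    by (auto simp: lin_form_xor_vec lin_form_xor_sum assms(2,3))
  also have "\<dots> = parity T c"
    using assms(4,5) by (intro parity_cong) (auto simp: cell_def)
  finally show ?thesis .
qed

text \<open>For \<open>i \<in> S\<close> all forms of \<open>Q\<close> are constant on the refined cell; otherwise the dependency
  created by adding \<open>i\<close> to \<open>S\<close> expresses one form of \<open>Q\<close> through its other forms there.\<close>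
lemma rank_le_on_refined_cell:
  fixes U :: "(nat \<Rightarrow> bool) set" and S :: "nat set" and J :: "nat \<Rightarrow> nat set"
    and f :: "nat \<Rightarrow> nat \<Rightarrow> nat \<Rightarrow> bool"
  defines "g \<equiv> \<lambda>(i, j). f i j"
  defines "U' \<equiv> U \<union> g ` Sigma S J"
  assumes "finite U" "finite S" "\<And>i. finite (J i)" "card (J i) \<le> Suc r"
    and rep: "\<forall>x\<in>cell m U c. Q x = G (\<lambda>j\<in>J i. lin_form m (f i j) x)"
    and indep: "indep_mod m U (Sigma S J) g"
    and maximal: "i \<notin> S \<Longrightarrow> \<not> indep_mod m U (Sigma (insert i S) J) g"
    and c': "c' \<in> form_values m U' ` cell m U c"
  shows "rank_le_on m (cell m U' c') r Q"
proof -
  have "U \<subseteq> U'"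
    by (simp add: U'_def)
  have rep': "\<forall>x\<in>cell m U' c'. Q x = G (\<lambda>j\<in>J i. lin_form m (f i j) x)"
    using rep cell_form_values_subset[OF \<open>U \<subseteq> U'\<close> c'] by blast
  have in_U': "g k \<in> U'" if "k \<in> Sigma S J" for k
    using that by (simp add: U'_def)
  show ?thesis
  proof (cases "i \<in> S")
    case True
    then have "\<forall>j\<in>J i. f i j \<in> U'"
      using in_U' by (auto simp: g_def)
    then show ?thesis
      using rep' by (rule rank_le_on_cell_of_forms_in)
  next
    case False
    obtain T R where T: "T \<subseteq> U" and R: "R \<subseteq> Sigma (insert i S) J" "R \<noteq> {}"
      and zero: "zero_below m (xor_vec (xor_sum T id) (xor_sum R g))"
      using maximal[OF False] unfolding indep_mod_def by blast
    define R1 where "R1 = R \<inter> Sigma S J"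
    define R2 where "R2 = {j. (i, j) \<in> R}"
    have "\<not> R \<subseteq> Sigma S J"
      using indep T R zero unfolding indep_mod_def by blast
    then obtain j0 where "j0 \<in> R2"
      using R(1) by (auto simp: R2_def)
    have "R2 \<subseteq> J i"
      using R(1) by (auto simp: R2_def)
    have R_split: "R = R1 \<union> Pair i ` R2" and disjoint: "R1 \<inter> Pair i ` R2 = {}"
      using R(1) False by (auto simp: R1_def R2_def)
    have "finite R"
      using R(1) assms(4,5) by (auto intro: finite_subset)
    have "finite T" "finite R1" "finite R2"
      using finite_subset[OF T \<open>finite U\<close>] finite_subset[OF \<open>R2 \<subseteq> J i\<close> assms(5)] \<open>finite R\<close>
      by (auto simp: R1_def)
    define \<kappa> where "\<kappa> \<longleftrightarrow> (parity T c' \<noteq> parity R1 (\<lambda>k. c' (g k)))"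
    have rel: "lin_form m (f i j0) x = (\<kappa> \<noteq> parity (R2 - {j0}) (\<lambda>j. lin_form m (f i j) x))"
      if x: "x \<in> cell m U' c'" for x
    proof -
      have "parity R (\<lambda>k. lin_form m (g k) x) = parity T c'"
        using T \<open>U \<subseteq> U'\<close> by (intro parity_lin_forms_on_cell[OF zero \<open>finite T\<close> \<open>finite R\<close> _ x]) auto
      moreover have "parity R (\<lambda>k. lin_form m (g k) x)
          = (parity R1 (\<lambda>k. lin_form m (g k) x) \<noteq> parity (Pair i ` R2) (\<lambda>k. lin_form m (g k) x))"
        unfolding R_split using \<open>finite R1\<close> \<open>finite R2\<close> disjoint by (intro parity_Un) auto
      moreover have "parity R1 (\<lambda>k. lin_form m (g k) x) = parity R1 (\<lambda>k. c' (g k))"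
        using x in_U' by (intro parity_cong) (auto simp: R1_def cell_def)
      moreover have "parity (Pair i ` R2) (\<lambda>k. lin_form m (g k) x) = parity R2 (\<lambda>j. lin_form m (f i j) x)"
        by (subst parity_image) (auto simp: inj_on_def g_def)
      moreover have "parity R2 (\<lambda>j. lin_form m (f i j) x)
          = (lin_form m (f i j0) x \<noteq> parity (R2 - {j0}) (\<lambda>j. lin_form m (f i j) x))"
        using \<open>j0 \<in> R2\<close> \<open>finite R2\<close> parity_insert[of "R2 - {j0}" j0] by (simp add: insert_absorb)
      ultimately show ?thesis
        by (auto simp: \<kappa>_def)
    qed
    show ?thesis
      by (rule rank_le_on_eliminate[where R = "R2 - {j0}" and \<kappa> = \<kappa>, OF assms(5,6) _ _ rep'])
        (use \<open>j0 \<in> R2\<close> \<open>R2 \<subseteq> J i\<close> rel in auto)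
  qed
qed

section \<open>Induction on the rank\<close>

definition decay :: "nat \<Rightarrow> real" where
  "decay r = 1 / 2 ^ (12 * r\<^sup>2 + 7)"

lemma decay_eq_powr: "decay r = 1/128 * 2 powr (- 12 * (real r)\<^sup>2)"
proof -
  have "(2::real) powr (- 12 * (real r)\<^sup>2) = inverse (2 powr real (12 * r\<^sup>2))"
    by (simp add: powr_minus)
  also have "\<dots> = inverse (2 ^ (12 * r\<^sup>2))"
    by (subst powr_realpow) auto
  finally show ?thesis
    by (simp add: decay_def power_add field_simps)
qed

text \<open>Chosen so that an independent family of \<open>threshold r * n\<close> functions, each contributing a
  factor \<open>1 - 2^-(2r+7)\<close>, yields exactly the bound \<open>2 powr (- decay r * n)\<close>.\<close>
definition threshold :: "nat \<Rightarrow> real" where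
  "threshold r = decay r * 2 ^ (2 * r + 7)"

lemma threshold_0: "threshold 0 = 1"
  by (simp add: threshold_def decay_def)

lemma decay_step: "real (Suc r) * threshold (Suc r) + decay (Suc r) \<le> decay r"
proof -
  define X :: nat where "X = 2 ^ (2 * Suc r + 7)"
  have "Suc r * X + 1 \<le> Suc r * X + X"
    by (simp add: X_def)
  also have "\<dots> = (Suc r + 1) * X"
    by simp
  also have "\<dots> \<le> 2 ^ Suc r * X"
    using less_exp[of "Suc r"] by (intro mult_right_mono) auto
  also have "\<dots> \<le> 2 ^ (24 * r + 12)"
    unfolding X_def power_add[symmetric] by (intro power_increasing) auto
  finally have "real (Suc r * X + 1) \<le> 2 ^ (24 * r + 12)"
    by (metis of_nat_le_iff of_nat_numeral of_nat_power)
  then have "decay (Suc r) * real (Suc r * X + 1) \<le> decay (Suc r) * 2 ^ (24 * r + 12)"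
    by (intro mult_left_mono) (simp_all add: decay_def)
  also have "\<dots> = decay r"
  proof -
    have "12 * (Suc r)\<^sup>2 + 7 = (12 * r\<^sup>2 + 7) + (24 * r + 12)"
      by (simp add: power2_eq_square)
    then show ?thesis
      by (simp add: decay_def power_add)
  qed
  finally show ?thesis
    by (simp add: threshold_def X_def algebra_simps)
qed

lemma one_minus_power_le_two_powr:
  fixes \<epsilon> :: real
  assumes "0 \<le> \<epsilon>" "\<epsilon> \<le> 1"
  shows "(1 - \<epsilon>) ^ k \<le> 2 powr (- \<epsilon> * k)"
proof -
  have "1 - \<epsilon> \<le> exp (- \<epsilon>)"
    using exp_ge_add_one_self[of "- \<epsilon>"] by simp
  also have "\<dots> \<le> exp (- \<epsilon> * ln 2)"
    using assms(1) ln_2_less_1 by (intro exp_mono) (simp add: mult_left_le)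
  also have "\<dots> = 2 powr (- \<epsilon>)"
    by (simp add: powr_def)
  finally have "(1 - \<epsilon>) ^ k \<le> (2 powr (- \<epsilon>)) ^ k"
    using assms(2) by (intro power_mono) auto
  also have "\<dots> = 2 powr (- \<epsilon> * k)"
    by (simp add: powr_power mult.commute)
  finally show ?thesis .
qed

lemma exists_maximal_subset:
  assumes "finite I" "Q {}"
  obtains S where "S \<subseteq> I" "Q S" "\<And>i. i \<in> I \<Longrightarrow> i \<notin> S \<Longrightarrow> \<not> Q (insert i S)"
proof -
  obtain S where S: "S \<in> {S. S \<subseteq> I \<and> Q S}"
    and max: "\<forall>S'\<in>{S. S \<subseteq> I \<and> Q S}. S \<subseteq> S' \<longrightarrow> S = S'"
    using finite_has_maximal[of "{S. S \<subseteq> I \<and> Q S}"] assms by auto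
  show thesis
  proof (rule that)
    show "S \<subseteq> I" "Q S"
      using S by auto
    show "\<not> Q (insert i S)" if "i \<in> I" "i \<notin> S" for i
      using max S that by blast
  qed
qed

lemma obtain_rank_representations:
  assumes "\<forall>i<n. rank_le_on m A r (P i)"
  obtains J :: "nat \<Rightarrow> nat set" and f :: "nat \<Rightarrow> nat \<Rightarrow> nat \<Rightarrow> bool" and G
  where "\<And>i. finite (J i)" "\<And>i. card (J i) \<le> r"
    "\<And>i. i < n \<Longrightarrow> \<forall>x\<in>A. P i x = G i (\<lambda>j\<in>J i. lin_form m (f i j) x)"
proof -
  have "\<exists>(J::nat set) (f::nat \<Rightarrow> nat \<Rightarrow> bool) G. finite J \<and> card J \<le> r \<and>
      (i < n \<longrightarrow> (\<forall>x\<in>A. P i x = G (\<lambda>j\<in>J. lin_form m (f j) x)))" for i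
  proof (cases "i < n")
    case True
    then show ?thesis
      using assms unfolding rank_le_on_def by blast
  qed (intro exI[of _ "{}"], auto)
  then show thesis
    using that by metis
qed

lemma overlap_cell_le_decay_of_indep:
  fixes J :: "nat \<Rightarrow> nat set" and f :: "nat \<Rightarrow> nat \<Rightarrow> nat \<Rightarrow> bool"
  assumes "finite U" "S \<subseteq> {..<n}" "threshold r * n \<le> card S"
    and "\<And>i. i \<in> S \<Longrightarrow> finite (J i) \<and> card (J i) \<le> r"
    and "\<And>i x. i \<in> S \<Longrightarrow> x \<in> cell m U c \<Longrightarrow> P i x = G i (\<lambda>j\<in>J i. lin_form m (f i j) x)"
    and "indep_mod m U (Sigma S J) (\<lambda>(i, j). f i j)"
  shows "overlap (cell m U c) n P \<le> 2 powr (- decay r * n)"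
proof -
  define \<epsilon> :: real where "\<epsilon> = 1 / 2 ^ (2 * r + 7)"
  have "overlap (cell m U c) n P \<le> (1 - \<epsilon>) ^ card S"
    unfolding \<epsilon>_def using assms(1,2,4-6) by (rule overlap_cell_le_of_indep)
  also have "\<dots> \<le> 2 powr (- \<epsilon> * card S)"
    by (rule one_minus_power_le_two_powr) (auto simp: \<epsilon>_def)
  also have "\<dots> \<le> 2 powr (- \<epsilon> * (threshold r * n))"
    using assms(3) by (intro powr_mono) (auto simp: \<epsilon>_def divide_right_mono)
  also have "- \<epsilon> * (threshold r * n) = - decay r * n"
    by (simp add: \<epsilon>_def threshold_def)
  finally show ?thesis .
qed

lemma overlap_cell_le_decay_of_maximal:
  fixes J :: "nat \<Rightarrow> nat set" and f :: "nat \<Rightarrow> nat \<Rightarrow> nat \<Rightarrow> bool"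
  assumes "finite U" "S \<subseteq> {..<n}" "card S < threshold (Suc r) * n"
    and J: "\<And>i. finite (J i)" "\<And>i. card (J i) \<le> Suc r"
    and rep: "\<And>i. i < n \<Longrightarrow> \<forall>x\<in>cell m U c. P i x = G i (\<lambda>j\<in>J i. lin_form m (f i j) x)"
    and indep: "indep_mod m U (Sigma S J) (\<lambda>(i, j). f i j)"
    and maximal: "\<And>i. i < n \<Longrightarrow> i \<notin> S \<Longrightarrow> \<not> indep_mod m U (Sigma (insert i S) J) (\<lambda>(i, j). f i j)"
    and IH: "\<And>U' c'. finite U' \<Longrightarrow> \<forall>i<n. rank_le_on m (cell m U' c') r (P i) \<Longrightarrow>
      overlap (cell m U' c') n P \<le> 2 powr (- decay r * n)"
  shows "overlap (cell m U c) n P \<le> 2 powr (- decay (Suc r) * n)"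
proof -
  define U' where "U' = U \<union> (\<lambda>(i, j). f i j) ` Sigma S J"
  define C where "C = form_values m U' ` cell m U c"
  have "finite S"
    using assms(2) finite_subset by blast
  then have "finite (Sigma S J)"
    using J(1) by auto
  then have "finite U'"
    using assms(1) by (simp add: U'_def)
  have "card (Sigma S J) \<le> Suc r * card S"
    using \<open>finite S\<close> J sum_bounded_above[of S "\<lambda>i. card (J i)" "Suc r"]
    by (simp add: card_SigmaI mult.commute)
  have "card (U' - U) \<le> card (Sigma S J)"
  proof -
    have "card (U' - U) \<le> card ((\<lambda>(i, j). f i j) ` Sigma S J)"
      using \<open>finite (Sigma S J)\<close> by (intro card_mono) (auto simp: U'_def)
    also have "\<dots> \<le> card (Sigma S J)"
      using \<open>finite (Sigma S J)\<close> by (rule card_image_le)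
    finally show ?thesis .
  qed
  then have "card (U' - U) \<le> Suc r * card S"
    using \<open>card (Sigma S J) \<le> Suc r * card S\<close> by linarith
  have "card C \<le> 2 ^ card (U' - U)"
    unfolding C_def using \<open>finite U'\<close> by (intro card_form_values_image_le) (auto simp: U'_def)
  also have "\<dots> \<le> 2 ^ (Suc r * card S)"
    using \<open>card (U' - U) \<le> Suc r * card S\<close> by (intro power_increasing) auto
  finally have "card C \<le> 2 ^ (Suc r * card S)" .
  have "overlap (cell m U c) n P \<le> (\<Sum>c'\<in>C. overlap (cell m U' c') n P)"
    unfolding C_def by (rule overlap_cell_le_sum_refined) (simp add: U'_def)
  also have "\<dots> \<le> (\<Sum>c'\<in>C. 2 powr (- decay r * n))"
  proof (rule sum_mono)
    fix c' assume "c' \<in> C"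
    have "\<forall>i<n. rank_le_on m (cell m U' c') r (P i)"
    proof (intro allI impI)
      fix i assume "i < n"
      show "rank_le_on m (cell m U' c') r (P i)"
        unfolding U'_def
        by (rule rank_le_on_refined_cell[OF assms(1) \<open>finite S\<close> J rep[OF \<open>i < n\<close>] indep
              maximal[OF \<open>i < n\<close>]])
          (use \<open>c' \<in> C\<close> in \<open>unfold C_def U'_def\<close>)
    qed
    then show "overlap (cell m U' c') n P \<le> 2 powr (- decay r * n)"
      using IH \<open>finite U'\<close> by blast
  qed
  also have "\<dots> = card C * 2 powr (- decay r * n)"
    by simp
  also have "\<dots> \<le> 2 powr real (Suc r * card S) * 2 powr (- decay r * n)"
  proof (rule mult_right_mono)
    have "real (card C) \<le> 2 ^ (Suc r * card S)"
      using \<open>card C \<le> 2 ^ (Suc r * card S)\<close> by (metis of_nat_le_iff of_nat_numeral of_nat_power)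
    then show "real (card C) \<le> 2 powr real (Suc r * card S)"
      by (subst powr_realpow) simp_all
  qed simp
  also have "\<dots> = 2 powr (real (Suc r * card S) - decay r * n)"
    by (simp add: powr_add[symmetric])
  also have "\<dots> \<le> 2 powr (Suc r * (threshold (Suc r) * n) - decay r * n)"
  proof -
    have "real (Suc r * card S) \<le> Suc r * (threshold (Suc r) * n)"
      unfolding of_nat_mult using assms(3) by (intro mult_left_mono) auto
    then show ?thesis
      by (intro powr_mono) linarith+
  qed
  also have "\<dots> \<le> 2 powr (- decay (Suc r) * n)"
    using mult_right_mono[OF decay_step[of r], of "real n"]
    by (intro powr_mono) (simp_all add: algebra_simps)
  finally show ?thesis .
qed

lemma overlap_cell_le_decay:
  assumes "finite U" "\<forall>i<n. rank_le_on m (cell m U c) r (P i)"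
  shows "overlap (cell m U c) n P \<le> 2 powr (- decay r * n)"
  using assms
proof (induction r arbitrary: U c)
  case (0 U c)
  obtain J :: "nat \<Rightarrow> nat set" and f :: "nat \<Rightarrow> nat \<Rightarrow> nat \<Rightarrow> bool" and G
    where J: "\<And>i. finite (J i)" "\<And>i. card (J i) \<le> 0"
      and rep: "\<And>i. i < n \<Longrightarrow> \<forall>x\<in>cell m U c. P i x = G i (\<lambda>j\<in>J i. lin_form m (f i j) x)"
    by (rule obtain_rank_representations[OF "0.prems"(2)]) auto
  have "Sigma {..<n} J = {}"
    using J by auto
  then have "indep_mod m U (Sigma {..<n} J) (\<lambda>(i, j). f i j)"
    by (simp add: indep_mod_def)
  then show ?case
    using "0.prems"(1) J rep
    by (intro overlap_cell_le_decay_of_indep[where S = "{..<n}"]) (auto simp: threshold_0)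
next
  case (Suc r U c)
  obtain J :: "nat \<Rightarrow> nat set" and f :: "nat \<Rightarrow> nat \<Rightarrow> nat \<Rightarrow> bool" and G
    where J: "\<And>i. finite (J i)" "\<And>i. card (J i) \<le> Suc r"
      and rep: "\<And>i. i < n \<Longrightarrow> \<forall>x\<in>cell m U c. P i x = G i (\<lambda>j\<in>J i. lin_form m (f i j) x)"
    by (rule obtain_rank_representations[OF Suc.prems(2)]) auto
  obtain S where S: "S \<subseteq> {..<n}" and indep: "indep_mod m U (Sigma S J) (\<lambda>(i, j). f i j)"
    and maximal: "\<And>i. i < n \<Longrightarrow> i \<notin> S \<Longrightarrow> \<not> indep_mod m U (Sigma (insert i S) J) (\<lambda>(i, j). f i j)"
    by (rule exists_maximal_subset[of "{..<n}" "\<lambda>S. indep_mod m U (Sigma S J) (\<lambda>(i, j). f i j)"])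
      (auto simp: indep_mod_def)
  show ?case
  proof (cases "threshold (Suc r) * n \<le> card S")
    case True
    have "P i x = G i (\<lambda>j\<in>J i. lin_form m (f i j) x)" if "i \<in> S" "x \<in> cell m U c" for i x
      using rep S that by blast
    with True show ?thesis
      using Suc.prems(1) S J indep by (intro overlap_cell_le_decay_of_indep) auto
  next
    case False
    then show ?thesis
      by (intro overlap_cell_le_decay_of_maximal[OF Suc.prems(1) S _ J rep indep maximal Suc.IH]) auto
  qed
qed

lemma lin_form_eq_odd_sum: "lin_form m a x = odd (\<Sum>i<m. of_bool (a i \<and> x ! i) :: nat)"
  by (simp add: lin_form_def parity_def Int_def)

lemma deg_le1_imp_affine:
  assumes "deg_le1 m L"
  obtains a0 a where "\<forall>x\<in>vecs m. L x = (a0 \<noteq> lin_form m a x)"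
proof -
  obtain a0 :: bool and a where "\<forall>x\<in>vecs m. L x = odd (of_bool a0 + (\<Sum>i<m. of_bool (a i \<and> x ! i)) :: nat)"
    using assms unfolding deg_le1_def by blast
  then have "\<forall>x\<in>vecs m. L x = (a0 \<noteq> lin_form m a x)"
    by (simp add: lin_form_eq_odd_sum)
  then show thesis
    by (rule that)
qed

text \<open>The \<open>m + 1\<close> forms \<open>x_0, \<dots>, x_(m-1), 0\<close> determine every function, so the set whose least
  element \<open>rank1\<close> takes is nonempty.\<close>
lemma rank1_attained:
  obtains L \<Gamma> where "\<forall>j<rank1 m Q. deg_le1 m (L j)"
    "\<forall>x\<in>vecs m. Q x = \<Gamma> (map (\<lambda>j. L j x) [0..<rank1 m Q])"
proof -
  define coord where "coord j x = (j < m \<and> x ! j)" for j and x :: "bool list"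
  have "deg_le1 m (coord j)" for j
  proof -
    have "(\<Sum>i<m. of_bool ((i = j) \<and> x ! i) :: nat) = (\<Sum>i<m. if i = j then of_bool (x ! j) else 0)"
      for x by (intro sum.cong) auto
    then have "(\<Sum>i<m. of_bool ((i = j) \<and> x ! i) :: nat) = of_bool (coord j x)" for x
      by (simp add: coord_def sum.delta)
    then show ?thesis
      unfolding deg_le1_def by (intro exI[of _ False] exI[of _ "\<lambda>i. i = j"]) simp
  qed
  moreover have "Q x = (\<lambda>ys. Q (take m ys)) (map (\<lambda>j. coord j x) [0..<Suc m])" if "x \<in> vecs m" for x
  proof -
    have "take m (map (\<lambda>j. coord j x) [0..<Suc m]) = map (\<lambda>j. x ! j) [0..<m]"
      by (simp add: coord_def)
    also have "\<dots> = x"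
      using that map_nth[of x] by (simp add: vecs_def)
    finally have "take m (map (\<lambda>j. coord j x) [0..<Suc m]) = x" .
    then show ?thesis
      by (simp only:)
  qed
  ultimately have "\<exists>k. 0 < k \<and> (\<exists>L \<Gamma>. (\<forall>j<k. deg_le1 m (L j)) \<and>
      (\<forall>x\<in>vecs m. Q x = \<Gamma> (map (\<lambda>j. L j x) [0..<k])))"
    by (intro exI[of _ "Suc m"] conjI exI[of _ coord] exI[of _ "\<lambda>ys. Q (take m ys)"] allI impI ballI)
      simp_all
  from LeastI_ex[OF this] show thesis
    unfolding rank1_def[symmetric] using that by blast
qed

lemma rank_le_on_vecs_of_rank1_le:
  assumes "rank1 m Q \<le> r"
  shows "rank_le_on m (vecs m) r Q"
proof -
  define k where "k = rank1 m Q"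
  obtain L \<Gamma> where L: "\<forall>j<k. deg_le1 m (L j)" and \<Gamma>: "\<forall>x\<in>vecs m. Q x = \<Gamma> (map (\<lambda>j. L j x) [0..<k])"
    unfolding k_def by (rule rank1_attained)
  have "\<forall>j. \<exists>a0 a. j < k \<longrightarrow> (\<forall>x\<in>vecs m. L j x = (a0 \<noteq> lin_form m a x))"
    using L deg_le1_imp_affine by metis
  then obtain a0 a where a: "\<And>j x. j < k \<Longrightarrow> x \<in> vecs m \<Longrightarrow> L j x = (a0 j \<noteq> lin_form m (a j) x)"
    by metis
  define G where "G v = \<Gamma> (map (\<lambda>j. a0 j \<noteq> v j) [0..<k])" for v
  have "Q x = G (\<lambda>j\<in>{..<k}. lin_form m (a j) x)" if "x \<in> vecs m" for x
  proof -
    have "map (\<lambda>j. L j x) [0..<k] = map (\<lambda>j. a0 j \<noteq> (\<lambda>j\<in>{..<k}. lin_form m (a j) x) j) [0..<k]"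
      using that by (intro map_cong) (auto simp: a)
    then show ?thesis
      using \<Gamma> that by (simp only: G_def)
  qed
  then show ?thesis
    unfolding rank_le_on_def using assms
    by (intro exI[of _ "{..<k}"] exI[of _ a] exI[of _ G]) (auto simp: k_def)
qed

theorem corollary8p3:
  shows "\<exists>C c :: real. C > 0 \<and> c > 0 \<and>
    (\<forall>(r::nat) (m::nat) (n::nat) (P::nat \<Rightarrow> bool list \<Rightarrow> bool).
       r \<ge> 1 \<longrightarrow> (\<forall>i<n. rank1 m (P i) \<le> r) \<longrightarrow>
       tv_dist (vecs n) (distP m n P) ber13
         \<ge> 1 - 2 powr (- c * 2 powr (- C * (real r)\<^sup>2) * real n))"
proof (rule exI[of _ 12], rule exI[of _ "1/128"], intro conjI allI impI)
  fix r m n :: nat and P :: "nat \<Rightarrow> bool list \<Rightarrow> bool"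
  assume "r \<ge> 1" and rank: "\<forall>i<n. rank1 m (P i) \<le> r"
  have "overlap (cell m {} c) n P \<le> 2 powr (- decay r * n)" for c
    using rank by (intro overlap_cell_le_decay) (simp_all add: rank_le_on_vecs_of_rank1_le)
  then show "1 - 2 powr (- (1/128) * 2 powr (- 12 * (real r)\<^sup>2) * n) \<le> tv_dist (vecs n) (distP m n P) ber13"
    by (simp add: tv_dist_eq_1_minus_overlap decay_eq_powr)
qed simp_all

end
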